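(* Let $d\ge1$, let $E\subset\mathbb{Z}^n$ be a (possibly infinite) $d$-sparse subset, and let $M$ be a paving matroid of rank $d+1$ on the ground set $E$. Then there exists a paving tropical ideal $I\subset\mathbb{B}[x_1^{\pm1},\dots,x_n^{\pm1}]$ of degree $d+1$ such that $\underline{M}(I|_E)=M$, i.e. the restriction of the underlying matroid of $I$ to $E$ equals $M$.
   Context: $\mathbb{B}=\{\infty,0\}$ with $\oplus=\min$ and multiplication $+$; $\operatorname{supp}(f)$ is the set of exponents with coefficient $\neq\infty$. A tropical ideal $I\subset\mathbb{B}[x_1^{\pm1},\dots,x_n^{\pm1}]$ is an ideal such that for all $f,g\in I$ and $\mathbf u\in\operatorname{supp}(f)\cap\operatorname{supp}(g)$ there is $h\in I$ with $\operatorname{supp}(f)\Delta\operatorname{supp}(g)\subset\operatorname{supp}(h)\subset(\operatorname{supp}(f)\cup\operatorname{supp}(g))\setminus\{\mathbf u\}$. Its underlying matroid $\underline M(I)$ on $\mathbb{Z}^n$ has as independent sets those containing no support of a polynomial in $I$; $\underline M(I|_E)$ is its restriction to $E$ (circuits: supports of polynomials of $I$ that are minimal and contained in $E$). $I$ is zero-dimensional of degree $r$ iff $\underline M(I)$ has finite rank $r$; it is a paving tropical ideal if moreover all circuits of $\underline M(I)$ have size $r$ or $r+1$. A (possibly infinite, finitary) matroid of finite rank $r$ is paving if all its circuits have size $r$ or $r+1$. $E\subset\mathbb{Z}^n$ is $d$-sparse if there is no $\mathbf u\neq\mathbf 0$ with $|E\cap(\mathbf u+E)|\ge d$. *)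

theory Defs
  imports "HOL-Analysis.Analysis"
begin

text \<open>A Laurent polynomial over the
Boolean semiring B = ({infinity,0}, min, +) is uniquely determined by its support, a finite
subset of Z^n; we represent it by that support.  Under this identification tropical
addition (min) is union of supports, and tropical multiplication (+) is the Minkowski sum
of supports; the zero polynomial is the empty support.\<close>

type_synonym ('n) bpoly = "(int ^ 'n) set"

definition bpoly_add :: "('n::finite) bpoly \<Rightarrow> 'n bpoly \<Rightarrow> 'n bpoly" where
  "bpoly_add f g = f \<union> g"

definition bpoly_mult :: "('n::finite) bpoly \<Rightarrow> 'n bpoly \<Rightarrow> 'n bpoly" where
  "bpoly_mult f g = {u + v | u v. u \<in> f \<and> v \<in> g}"

definition supp :: "('n::finite) bpoly \<Rightarrow> (int ^ 'n) set" where
  "supp f = f"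

definition bideal :: "('n::finite) bpoly set \<Rightarrow> bool" where
  "bideal I \<longleftrightarrow> (\<forall>f\<in>I. finite f) \<and> {} \<in> I \<and>
     (\<forall>f\<in>I. \<forall>g\<in>I. bpoly_add f g \<in> I) \<and>
     (\<forall>f\<in>I. \<forall>g. finite g \<longrightarrow> bpoly_mult g f \<in> I)"

definition tropical_ideal :: "('n::finite) bpoly set \<Rightarrow> bool" where
  "tropical_ideal I \<longleftrightarrow> bideal I \<and>
     (\<forall>f\<in>I. \<forall>g\<in>I. \<forall>u \<in> supp f \<inter> supp g. \<exists>h\<in>I.
        (supp f - supp g) \<union> (supp g - supp f) \<subseteq> supp h \<and>
        supp h \<subseteq> (supp f \<union> supp g) - {u})"

definition underlying_indep :: "('n::finite) bpoly set \<Rightarrow> (int ^ 'n) set \<Rightarrow> bool" where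
  "underlying_indep I A \<longleftrightarrow> (\<forall>f\<in>I. f \<noteq> {} \<longrightarrow> \<not> supp f \<subseteq> A)"

definition underlying_indep_restr :: "('n::finite) bpoly set \<Rightarrow> (int ^ 'n) set \<Rightarrow> (int ^ 'n) set \<Rightarrow> bool" where
  "underlying_indep_restr I E A \<longleftrightarrow> A \<subseteq> E \<and> underlying_indep I A"

definition has_rank :: "('a set \<Rightarrow> bool) \<Rightarrow> nat \<Rightarrow> bool" where
  "has_rank indep r \<longleftrightarrow> (\<forall>A. indep A \<longrightarrow> finite A \<and> card A \<le> r) \<and>
     (\<exists>A. indep A \<and> finite A \<and> card A = r)"

definition circuit :: "'a set \<Rightarrow> ('a set \<Rightarrow> bool) \<Rightarrow> 'a set \<Rightarrow> bool" where
  "circuit E indep C \<longleftrightarrow> C \<subseteq> E \<and> \<not> indep C \<and> (\<forall>x\<in>C. indep (C - {x}))"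

definition finite_rank_matroid :: "'a set \<Rightarrow> ('a set \<Rightarrow> bool) \<Rightarrow> nat \<Rightarrow> bool" where
  "finite_rank_matroid E indep r \<longleftrightarrow>
     indep {} \<and>
     (\<forall>A. indep A \<longrightarrow> A \<subseteq> E) \<and>
     (\<forall>A B. indep B \<and> A \<subseteq> B \<longrightarrow> indep A) \<and>
     (\<forall>A B. indep A \<and> indep B \<and> finite A \<and> finite B \<and> card A < card B \<longrightarrow>
        (\<exists>x\<in>B - A. indep (insert x A))) \<and>
     (\<forall>A. A \<subseteq> E \<and> (\<forall>F. F \<subseteq> A \<and> finite F \<longrightarrow> indep F) \<longrightarrow> indep A) \<and>
     has_rank indep r"

definition paving_matroid :: "'a set \<Rightarrow> ('a set \<Rightarrow> bool) \<Rightarrow> nat \<Rightarrow> bool" where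
  "paving_matroid E indep r \<longleftrightarrow> finite_rank_matroid E indep r \<and>
     (\<forall>C. circuit E indep C \<longrightarrow> card C = r \<or> card C = r + 1)"

text \<open>Zero-dimensional tropical ideal of degree r: underlying matroid has finite rank r.\<close>
definition paving_tropical_ideal :: "('n::finite) bpoly set \<Rightarrow> nat \<Rightarrow> bool" where
  "paving_tropical_ideal I r \<longleftrightarrow> tropical_ideal I \<and> has_rank (underlying_indep I) r \<and>
     (\<forall>C. circuit UNIV (underlying_indep I) C \<longrightarrow> card C = r \<or> card C = r + 1)"

definition d_sparse :: "nat \<Rightarrow> (int ^ ('n::finite)) set \<Rightarrow> bool" where
  "d_sparse d E \<longleftrightarrow> \<not> (\<exists>u. u \<noteq> 0 \<and>
     (\<exists>F. F \<subseteq> E \<inter> ((\<lambda>x. u + x) ` E) \<and> finite F \<and> card F \<ge> d))"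

end

theory Submission
  imports Defs
begin

text \<open>In a paving matroid of rank d + 1 everything is encoded by its dependent (d + 1)-sets:
two of them meeting in d points span only dependent (d + 1)-sets, and the circuits are these
sets together with the (d + 2)-sets containing none of them.  Conversely, any family of
(d + 1)-sets with this closure property yields, in this way, the circuits of a paving matroid.
Taking all translates of the dependent (d + 1)-subsets of E keeps the closure property,
because by d-sparseness two translates meeting in d points come from the same translation
vector, and for the same reason no translate of a dependent set is an independent subset of E.
The resulting matroid on Z^n is translation invariant, so the finite unions of its circuits
form a tropical ideal (circuit elimination gives the tropical exchange axiom) whose underlying
matroid is this paving matroid; by construction it restricts to M on E.\<close>

section \<open>Paving families and their circuits\<close>

text \<open>The dependent (d + 1)-sets of a paving matroid of rank d + 1 form a paving family, and
the predicate paving_circuit recovers the circuits of the matroid from them.  Membership of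
all (d + 1)-subsets of S in TT, i.e. low_rank, says that S has rank at most d.\<close>

definition paving_family :: "'a set set \<Rightarrow> nat \<Rightarrow> bool" where
  "paving_family TT d \<longleftrightarrow> (\<forall>T\<in>TT. card T = Suc d) \<and>
     (\<forall>T\<in>TT. \<forall>T'\<in>TT. \<forall>K. d \<le> card (T \<inter> T') \<longrightarrow> K \<subseteq> T \<union> T' \<longrightarrow> card K = Suc d \<longrightarrow> K \<in> TT)"

definition low_rank :: "'a set set \<Rightarrow> nat \<Rightarrow> 'a set \<Rightarrow> bool" where
  "low_rank TT d S \<longleftrightarrow> (\<forall>K\<subseteq>S. card K = Suc d \<longrightarrow> K \<in> TT)"

definition paving_circuit :: "'a set set \<Rightarrow> nat \<Rightarrow> 'a set \<Rightarrow> bool" where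
  "paving_circuit TT d C \<longleftrightarrow> C \<in> TT \<or>
     (finite C \<and> card C = Suc (Suc d) \<and> (\<forall>K\<subseteq>C. card K = Suc d \<longrightarrow> K \<notin> TT))"

lemma card_Suc_imp_finite: "card A = Suc n \<Longrightarrow> finite A"
  by (rule card_ge_0_finite) simp

lemma paving_family_card: "paving_family TT d \<Longrightarrow> T \<in> TT \<Longrightarrow> card T = Suc d"
  unfolding paving_family_def by blast

lemma paving_family_closed:
  "paving_family TT d \<Longrightarrow> T \<in> TT \<Longrightarrow> T' \<in> TT \<Longrightarrow> d \<le> card (T \<inter> T') \<Longrightarrow>
    K \<subseteq> T \<union> T' \<Longrightarrow> card K = Suc d \<Longrightarrow> K \<in> TT"
  unfolding paving_family_def by blast

lemma paving_family_exchange: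
  assumes fam: "paving_family TT d" and K: "finite K" "card K = Suc d"
    and xw: "x \<in> K" "w \<in> K" "x \<noteq> w" and y: "y \<notin> K"
    and T: "insert y (K - {x}) \<in> TT" and T': "insert y (K - {w}) \<in> TT"
  shows "K \<in> TT"
proof (rule paving_family_closed[OF fam T T' _ _ K(2)])
  have "card {x, w} \<le> card K"
    using K(1) xw by (intro card_mono) auto
  with K xw y have "card (insert y (K - {x, w})) = d"
    by (simp add: card_Diff_subset)
  moreover have "insert y (K - {x, w}) \<subseteq> insert y (K - {x}) \<inter> insert y (K - {w})"
    by blast
  ultimately show "d \<le> card (insert y (K - {x}) \<inter> insert y (K - {w}))"
    using K(1) by (metis card_mono finite_Int finite_insert finite_Diff)
  show "K \<subseteq> insert y (K - {x}) \<union> insert y (K - {w})"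
    using xw by blast
qed

lemma low_rank_member: "paving_family TT d \<Longrightarrow> T \<in> TT \<Longrightarrow> low_rank TT d T"
  unfolding low_rank_def
  by (metis card_Suc_imp_finite card_subset_eq paving_family_card)

lemma low_rank_Un:
  assumes fam: "paving_family TT d" and S: "low_rank TT d S" and S': "low_rank TT d S'"
    and Q: "Q \<subseteq> S \<inter> S'" "finite Q" "card Q = d"
  shows "low_rank TT d (S \<union> S')"
  unfolding low_rank_def
proof (intro allI impI)
  fix K assume "K \<subseteq> S \<union> S'" "card K = Suc d"
  then show "K \<in> TT"
  \<comment> \<open>Swapping a point of K outside S or S' for a point of Q decreases the measure.\<close>
  proof (induction "card (K - S) + card (K - S')" arbitrary: K rule: less_induct)
    case less
    have fin: "finite K" using less.prems(2) by (rule card_Suc_imp_finite)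
    show ?case
    proof (cases "K \<subseteq> S \<or> K \<subseteq> S'")
      case True
      then show ?thesis using S S' less.prems(2) unfolding low_rank_def by blast
    next
      case False
      then obtain x w where x: "x \<in> K" "x \<notin> S" and w: "w \<in> K" "w \<notin> S'" by blast
      with less.prems(1) have "x \<noteq> w" by blast
      have "\<not> Q \<subseteq> K"
      proof
        assume "Q \<subseteq> K"
        with x w fin have "card (insert x (insert w Q)) \<le> card K" by (intro card_mono) auto
        moreover have "x \<notin> Q" "w \<notin> Q" using x w Q(1) by auto
        ultimately show False using Q \<open>x \<noteq> w\<close> less.prems(2) by simp
      qed
      then obtain y where y: "y \<in> Q" "y \<notin> K" by blast
      have yS: "y \<in> S" "y \<in> S'" using y Q by auto
      have swap: "insert y (K - {z}) \<in> TT" if z: "z \<in> K" "z \<notin> S \<or> z \<notin> S'" for z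
      proof (rule less.hyps)
        have "insert y (K - {z}) - S = K - S - {z}" "insert y (K - {z}) - S' = K - S' - {z}"
          using yS by auto
        moreover have "card (K - X - {z}) \<le> card (K - X)" for X
          by (rule card_mono) (use fin in auto)
        moreover have "card (K - S - {z}) < card (K - S) \<or> card (K - S' - {z}) < card (K - S')"
          using z fin by (auto intro: card_Diff1_less)
        ultimately show "card (insert y (K - {z}) - S) + card (insert y (K - {z}) - S')
            < card (K - S) + card (K - S')"
          by (metis add_le_less_mono add_less_le_mono)
        show "insert y (K - {z}) \<subseteq> S \<union> S'" using less.prems(1) yS by blast
        show "card (insert y (K - {z})) = Suc d" using fin z(1) y(2) less.prems(2) by simp
      qed
      from swap[of x] swap[of w] x w show ?thesis
        using paving_family_exchange[OF fam fin less.prems(2) x(1) w(1) \<open>x \<noteq> w\<close> y(2)] by blast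
    qed
  qed
qed

lemma paving_circuit_card:
  "paving_family TT d \<Longrightarrow> paving_circuit TT d C \<Longrightarrow> card C = Suc d \<or> card C = Suc (Suc d)"
  unfolding paving_circuit_def by (auto dest: paving_family_card)

lemma paving_circuit_finite: "paving_family TT d \<Longrightarrow> paving_circuit TT d C \<Longrightarrow> finite C"
  using paving_circuit_card card_Suc_imp_finite by blast

lemma paving_circuit_nonempty: "paving_family TT d \<Longrightarrow> paving_circuit TT d C \<Longrightarrow> C \<noteq> {}"
  using paving_circuit_card by fastforce

lemma paving_circuit_in_large_set:
  assumes "finite Y" "card Y = Suc (Suc d)"
  shows "\<exists>C\<subseteq>Y. paving_circuit TT d C"
  using assms unfolding paving_circuit_def by blast

lemma no_paving_circuit_imp_card_le:
  assumes "\<And>C. paving_circuit TT d C \<Longrightarrow> \<not> C \<subseteq> A"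
  shows "finite A \<and> card A \<le> Suc d"
proof (rule ccontr)
  assume "\<not> (finite A \<and> card A \<le> Suc d)"
  then obtain Y where "Y \<subseteq> A" "finite Y" "card Y = Suc (Suc d)"
    by (metis infinite_arbitrarily_large not_less_eq_eq obtain_subset_with_card_n)
  with paving_circuit_in_large_set[of Y d TT] assms show False by blast
qed

lemma paving_circuit_subset_imp_member:
  assumes fam: "paving_family TT d" and C: "paving_circuit TT d C"
    and B: "C \<subseteq> B" "card B = Suc d"
  shows "B \<in> TT"
proof -
  have "finite B" using B(2) by (rule card_Suc_imp_finite)
  with B have "card C \<le> Suc d" by (metis card_mono)
  with paving_circuit_card[OF fam C] B(2) have "card C = card B" by simp
  with B(1) \<open>finite B\<close> have "C = B" by (simp add: card_subset_eq)
  with C B(2) show ?thesis unfolding paving_circuit_def by simp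
qed

lemma paving_circuit_through:
  assumes B: "card B = Suc d" "B \<notin> TT" and a: "a \<notin> B"
  shows "\<exists>C. paving_circuit TT d C \<and> a \<in> C \<and> C \<subseteq> insert a B"
proof (cases "\<exists>K\<subseteq>insert a B. card K = Suc d \<and> K \<in> TT")
  case True
  then obtain K where K: "K \<subseteq> insert a B" "card K = Suc d" "K \<in> TT" by blast
  have "a \<in> K"
  proof (rule ccontr)
    assume "a \<notin> K"
    with K(1) have "K \<subseteq> B" by blast
    then have "K = B" using K(2) B(1) card_Suc_imp_finite card_subset_eq by metis
    with K(3) B(2) show False by simp
  qed
  with K show ?thesis unfolding paving_circuit_def by blast
next
  case False
  with B a have "paving_circuit TT d (insert a B)"
    unfolding paving_circuit_def using card_Suc_imp_finite by auto
  then show ?thesis by blast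
qed

lemma paving_circuit_low_rank_member:
  assumes C: "paving_circuit TT d C" and S: "low_rank TT d S" and x: "x \<in> C" "C - {x} \<subseteq> S"
  shows "C \<in> TT"
proof (rule ccontr)
  assume "C \<notin> TT"
  with C have "finite C" "card C = Suc (Suc d)" "\<forall>K\<subseteq>C. card K = Suc d \<longrightarrow> K \<notin> TT"
    unfolding paving_circuit_def by auto
  moreover from S x(2) have "card (C - {x}) = Suc d \<longrightarrow> C - {x} \<in> TT"
    unfolding low_rank_def by blast
  ultimately show False using x(1) by auto
qed

lemma paving_circuit_strong_elim:
  assumes fam: "paving_family TT d"
    and C1: "paving_circuit TT d C1" and C2: "paving_circuit TT d C2"
    and u: "u \<in> C1" "u \<in> C2" and a: "a \<in> C1" "a \<notin> C2"
  shows "\<exists>C. paving_circuit TT d C \<and> a \<in> C \<and> C \<subseteq> C1 \<union> C2 - {u}"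
proof (cases "low_rank TT d (C1 \<union> C2 - {u, a})")
  case False
  then obtain B where B: "B \<subseteq> C1 \<union> C2 - {u, a}" "card B = Suc d" "B \<notin> TT"
    unfolding low_rank_def by blast
  then have "a \<notin> B" by blast
  from paving_circuit_through[OF B(2,3) this] B(1) a u show ?thesis by blast
next
  case True
  \<comment> \<open>Then C2, C1 and C1 \<union> C2 are all forced to have rank d, and a replaces u in C2.\<close>
  have fin: "finite C1" "finite C2"
    using fam C1 C2 by (blast intro: paving_circuit_finite)+
  have "C2 \<in> TT"
    by (rule paving_circuit_low_rank_member[OF C2 True u(2)]) (use a in blast)
  with fam have "card C2 = Suc d" by (rule paving_family_card)
  have "low_rank TT d ((C1 \<union> C2 - {u, a}) \<union> C2)"
    by (rule low_rank_Un[OF fam True low_rank_member[OF fam \<open>C2 \<in> TT\<close>], of "C2 - {u}"])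
      (use a u fin \<open>card C2 = Suc d\<close> in auto)
  also have "(C1 \<union> C2 - {u, a}) \<union> C2 = C1 \<union> C2 - {a}" using u a by blast
  finally have low: "low_rank TT d (C1 \<union> C2 - {a})" .
  have "C1 \<in> TT"
    by (rule paving_circuit_low_rank_member[OF C1 low a(1)]) blast
  with fam have "card C1 = Suc d" by (rule paving_family_card)
  have "low_rank TT d ((C1 \<union> C2 - {a}) \<union> C1)"
    by (rule low_rank_Un[OF fam low low_rank_member[OF fam \<open>C1 \<in> TT\<close>], of "C1 - {a}"])
      (use a fin \<open>card C1 = Suc d\<close> in auto)
  moreover have "insert a (C2 - {u}) \<subseteq> (C1 \<union> C2 - {a}) \<union> C1" using a by blast
  moreover have "card (insert a (C2 - {u})) = Suc d" using a u fin \<open>card C2 = Suc d\<close> by simp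
  ultimately have "insert a (C2 - {u}) \<in> TT" unfolding low_rank_def by blast
  moreover have "insert a (C2 - {u}) \<subseteq> C1 \<union> C2 - {u}" using a u by blast
  ultimately show ?thesis unfolding paving_circuit_def by blast
qed

lemma paving_circuit_translate:
  fixes TT :: "'a::ab_group_add set set"
  assumes transl: "\<And>T v. T \<in> TT \<Longrightarrow> (\<lambda>x. v + x) ` T \<in> TT"
    and C: "paving_circuit TT d C"
  shows "paving_circuit TT d ((\<lambda>x. v + x) ` C)"
proof (cases "C \<in> TT")
  case True
  then show ?thesis using transl unfolding paving_circuit_def by blast
next
  case False
  with C have C': "finite C" "card C = Suc (Suc d)" "\<forall>K\<subseteq>C. card K = Suc d \<longrightarrow> K \<notin> TT"
    unfolding paving_circuit_def by auto
  have "K \<notin> TT" if "K \<subseteq> (\<lambda>x. v + x) ` C" "card K = Suc d" for K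
  proof
    assume "K \<in> TT"
    then have "(\<lambda>x. - v + x) ` K \<in> TT" by (rule transl)
    moreover have "(\<lambda>x. - v + x) ` K \<subseteq> C" using that(1) by auto
    moreover have "card ((\<lambda>x. - v + x) ` K) = Suc d"
      using that(2) by (simp add: card_image translate_inj_on)
    ultimately show False using C'(3) by blast
  qed
  moreover have "card ((\<lambda>x. v + x) ` C) = Suc (Suc d)"
    using C'(2) by (simp add: card_image translate_inj_on)
  ultimately show ?thesis unfolding paving_circuit_def using C'(1) by blast
qed

section \<open>Tropical ideals spanned by translation-invariant circuits\<close>

definition circuit_union_ideal :: "((int ^ 'n::finite) set \<Rightarrow> bool) \<Rightarrow> 'n bpoly set" where
  "circuit_union_ideal Circ = {S. finite S \<and> (\<forall>x\<in>S. \<exists>C. Circ C \<and> x \<in> C \<and> C \<subseteq> S)}"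

lemma bpoly_mult_eq_image: "bpoly_mult f g = (\<lambda>(u, v). u + v) ` (f \<times> g)"
  unfolding bpoly_mult_def by auto

lemma bideal_circuit_union_ideal:
  assumes transl: "\<And>C v. Circ C \<Longrightarrow> Circ ((\<lambda>x. v + x) ` C)"
  shows "bideal (circuit_union_ideal Circ)"
  unfolding bideal_def
proof (intro conjI ballI allI impI)
  let ?I = "circuit_union_ideal Circ"
  show "finite f" if "f \<in> ?I" for f
    using that unfolding circuit_union_ideal_def by blast
  show "{} \<in> ?I"
    unfolding circuit_union_ideal_def by blast
  show "bpoly_add f g \<in> ?I" if "f \<in> ?I" "g \<in> ?I" for f g
    using that unfolding circuit_union_ideal_def bpoly_add_def by blast
  show "bpoly_mult h f \<in> ?I" if f: "f \<in> ?I" and h: "finite h" for f h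
  proof -
    have "\<exists>C. Circ C \<and> z \<in> C \<and> C \<subseteq> bpoly_mult h f" if "z \<in> bpoly_mult h f" for z
    proof -
      obtain p q where pq: "z = p + q" "p \<in> h" "q \<in> f"
        using \<open>z \<in> bpoly_mult h f\<close> unfolding bpoly_mult_def by blast
      obtain C where C: "Circ C" "q \<in> C" "C \<subseteq> f"
        using f pq(3) unfolding circuit_union_ideal_def by blast
      have "(\<lambda>x. p + x) ` C \<subseteq> bpoly_mult h f"
        using C(3) pq(2) unfolding bpoly_mult_def by blast
      with transl[OF C(1)] pq(1) C(2) show ?thesis by blast
    qed
    moreover have "finite (bpoly_mult h f)"
      using f h unfolding bpoly_mult_eq_image circuit_union_ideal_def by simp
    ultimately show ?thesis unfolding circuit_union_ideal_def by blast
  qed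
qed

lemma circuit_union_ideal_elim:
  assumes fg: "f \<in> circuit_union_ideal Circ" "g \<in> circuit_union_ideal Circ"
    and u: "u \<in> f" "u \<in> g" and a: "a \<in> f" "a \<notin> g"
    and elim: "\<And>C1 C2 u a. Circ C1 \<Longrightarrow> Circ C2 \<Longrightarrow> u \<in> C1 \<Longrightarrow> u \<in> C2 \<Longrightarrow>
      a \<in> C1 \<Longrightarrow> a \<notin> C2 \<Longrightarrow> \<exists>C. Circ C \<and> a \<in> C \<and> C \<subseteq> C1 \<union> C2 - {u}"
  shows "\<exists>C. Circ C \<and> a \<in> C \<and> C \<subseteq> f \<union> g - {u}"
proof -
  obtain C1 where C1: "Circ C1" "a \<in> C1" "C1 \<subseteq> f"
    using fg(1) a(1) unfolding circuit_union_ideal_def by blast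
  show ?thesis
  proof (cases "u \<in> C1")
    case False
    with C1 show ?thesis by blast
  next
    case True
    obtain C2 where C2: "Circ C2" "u \<in> C2" "C2 \<subseteq> g"
      using fg(2) u(2) unfolding circuit_union_ideal_def by blast
    with a(2) have "a \<notin> C2" by blast
    from elim[OF C1(1) C2(1) True C2(2) C1(2) this] C1(3) C2(3) show ?thesis by blast
  qed
qed

lemma tropical_ideal_circuit_union_ideal:
  assumes transl: "\<And>C v. Circ C \<Longrightarrow> Circ ((\<lambda>x. v + x) ` C)"
    and elim: "\<And>C1 C2 u a. Circ C1 \<Longrightarrow> Circ C2 \<Longrightarrow> u \<in> C1 \<Longrightarrow> u \<in> C2 \<Longrightarrow>
      a \<in> C1 \<Longrightarrow> a \<notin> C2 \<Longrightarrow> \<exists>C. Circ C \<and> a \<in> C \<and> C \<subseteq> C1 \<union> C2 - {u}"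
  shows "tropical_ideal (circuit_union_ideal Circ)"
proof -
  let ?I = "circuit_union_ideal Circ"
  have cover: "\<exists>C. Circ C \<and> a \<in> C \<and> C \<subseteq> f \<union> g - {u}"
    if "f \<in> ?I" "g \<in> ?I" "u \<in> f" "u \<in> g" "a \<in> f" "a \<notin> g" for f g u a
    by (rule circuit_union_ideal_elim[OF that]) (fact elim)
  have exchange: "\<exists>h\<in>?I. (f - g) \<union> (g - f) \<subseteq> h \<and> h \<subseteq> f \<union> g - {u}"
    if fg: "f \<in> ?I" "g \<in> ?I" and u: "u \<in> f" "u \<in> g" for f g u
  proof -
    define h where "h = \<Union>{C. Circ C \<and> C \<subseteq> f \<union> g - {u}}"
    have sub: "h \<subseteq> f \<union> g - {u}" unfolding h_def by blast
    have "finite (f \<union> g)" using fg unfolding circuit_union_ideal_def by simp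
    then have "finite h" using sub by (simp add: finite_subset)
    moreover have "\<exists>C. Circ C \<and> x \<in> C \<and> C \<subseteq> h" if "x \<in> h" for x
    proof -
      obtain C where C: "Circ C" "C \<subseteq> f \<union> g - {u}" "x \<in> C"
        using \<open>x \<in> h\<close> unfolding h_def by blast
      then have "C \<subseteq> h" unfolding h_def by blast
      with C show ?thesis by blast
    qed
    ultimately have "h \<in> ?I" unfolding circuit_union_ideal_def by blast
    moreover have "f - g \<subseteq> h"
      using cover[OF fg u] unfolding h_def by blast
    moreover have "g - f \<subseteq> h"
      using cover[OF fg(2,1) u(2,1)] unfolding h_def by (auto simp: Un_commute)
    ultimately show ?thesis using sub by blast
  qed
  show ?thesis
    unfolding tropical_ideal_def supp_def
  proof (intro conjI bideal_circuit_union_ideal[of Circ, OF transl] ballI)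
    show "\<exists>h\<in>?I. (f - g) \<union> (g - f) \<subseteq> h \<and> h \<subseteq> f \<union> g - {u}"
      if "f \<in> ?I" "g \<in> ?I" "u \<in> f \<inter> g" for f g u
      using exchange that by blast
  qed
qed

lemma underlying_indep_circuit_union_ideal_iff:
  assumes fin: "\<And>C. Circ C \<Longrightarrow> finite C" and nonempty: "\<And>C. Circ C \<Longrightarrow> C \<noteq> {}"
  shows "underlying_indep (circuit_union_ideal Circ) A \<longleftrightarrow> (\<forall>C. Circ C \<longrightarrow> \<not> C \<subseteq> A)"
proof
  assume indep: "underlying_indep (circuit_union_ideal Circ) A"
  show "\<forall>C. Circ C \<longrightarrow> \<not> C \<subseteq> A"
  proof (intro allI impI)
    fix C assume "Circ C"
    then have "C \<in> circuit_union_ideal Circ" "C \<noteq> {}"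
      using fin nonempty unfolding circuit_union_ideal_def by auto
    with indep show "\<not> C \<subseteq> A" unfolding underlying_indep_def supp_def by blast
  qed
next
  assume "\<forall>C. Circ C \<longrightarrow> \<not> C \<subseteq> A"
  then show "underlying_indep (circuit_union_ideal Circ) A"
    unfolding underlying_indep_def supp_def circuit_union_ideal_def by blast
qed

lemma circuit_underlying_indep_circuit_union_ideal:
  assumes fin: "\<And>C. Circ C \<Longrightarrow> finite C" and nonempty: "\<And>C. Circ C \<Longrightarrow> C \<noteq> {}"
    and C: "circuit UNIV (underlying_indep (circuit_union_ideal Circ)) C"
  shows "Circ C"
proof -
  note indep_iff = underlying_indep_circuit_union_ideal_iff[OF fin nonempty]
  have dep: "\<not> underlying_indep (circuit_union_ideal Circ) C"
    and minimal: "\<And>x. x \<in> C \<Longrightarrow> underlying_indep (circuit_union_ideal Circ) (C - {x})"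
    using C unfolding circuit_def by auto
  obtain C' where C': "Circ C'" "C' \<subseteq> C"
    using dep indep_iff by blast
  have "C' = C"
  proof (rule ccontr)
    assume "C' \<noteq> C"
    with C'(2) obtain x where "x \<in> C" "C' \<subseteq> C - {x}" by blast
    with minimal[of x] C'(1) indep_iff show False by blast
  qed
  with C'(1) show ?thesis by simp
qed

lemma paving_tropical_ideal_circuit_union_ideal:
  fixes TT :: "(int ^ 'n::finite) set set"
  assumes fam: "paving_family TT d"
    and transl: "\<And>T v. T \<in> TT \<Longrightarrow> (\<lambda>x. v + x) ` T \<in> TT"
    and B: "card B = Suc d" "B \<notin> TT"
  shows "paving_tropical_ideal (circuit_union_ideal (paving_circuit TT d)) (d + 1)"
proof -
  let ?I = "circuit_union_ideal (paving_circuit TT d)"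
  have fin: "\<And>C. paving_circuit TT d C \<Longrightarrow> finite C"
    using fam by (rule paving_circuit_finite)
  have nonempty: "\<And>C. paving_circuit TT d C \<Longrightarrow> C \<noteq> {}"
    using fam by (rule paving_circuit_nonempty)
  note indep_iff = underlying_indep_circuit_union_ideal_iff[of "paving_circuit TT d", OF fin nonempty]
  have "tropical_ideal ?I"
    by (rule tropical_ideal_circuit_union_ideal[of "paving_circuit TT d",
          OF paving_circuit_translate[OF transl] paving_circuit_strong_elim[OF fam]])
  moreover have "finite A \<and> card A \<le> d + 1" if "underlying_indep ?I A" for A
    using no_paving_circuit_imp_card_le[of TT d A] that indep_iff by simp
  moreover have "underlying_indep ?I B"
    using indep_iff paving_circuit_subset_imp_member[OF fam _ _ B(1)] B(2) by blast
  then have "\<exists>A. underlying_indep ?I A \<and> finite A \<and> card A = d + 1"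
    using B(1) card_Suc_imp_finite by (intro exI[of _ B]) simp
  moreover have "card C = d + 1 \<or> card C = d + 1 + 1" if "circuit UNIV (underlying_indep ?I) C" for C
    using paving_circuit_card[OF fam circuit_underlying_indep_circuit_union_ideal[OF fin nonempty that]]
    by simp
  ultimately show ?thesis unfolding paving_tropical_ideal_def has_rank_def by blast
qed

section \<open>Finite-rank and paving matroids\<close>

lemma finite_rank_matroid_subset_ground:
  "finite_rank_matroid E ind r \<Longrightarrow> ind A \<Longrightarrow> A \<subseteq> E"
  unfolding finite_rank_matroid_def by blast

lemma finite_rank_matroid_indep_subset:
  assumes "finite_rank_matroid E ind r" "ind B" "A \<subseteq> B"
  shows "ind A"
  using assms unfolding finite_rank_matroid_def by metis

lemma finite_rank_matroid_augment:
  assumes "finite_rank_matroid E ind r" "ind A" "ind B" "finite A" "finite B" "card A < card B"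
  shows "\<exists>x\<in>B - A. ind (insert x A)"
  using assms unfolding finite_rank_matroid_def by metis

lemma finite_rank_matroid_finitary:
  assumes "finite_rank_matroid E ind r" "A \<subseteq> E" "\<And>F. F \<subseteq> A \<Longrightarrow> finite F \<Longrightarrow> ind F"
  shows "ind A"
  using assms unfolding finite_rank_matroid_def by metis

lemma finite_rank_matroid_has_rank: "finite_rank_matroid E ind r \<Longrightarrow> has_rank ind r"
  unfolding finite_rank_matroid_def by blast

lemma finite_rank_matroid_card_le: "finite_rank_matroid E ind r \<Longrightarrow> ind A \<Longrightarrow> card A \<le> r"
  using finite_rank_matroid_has_rank unfolding has_rank_def by blast

lemma paving_matroid_finite_rank_matroid: "paving_matroid E ind r \<Longrightarrow> finite_rank_matroid E ind r"
  unfolding paving_matroid_def by blast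

lemma paving_matroid_circuit_card:
  "paving_matroid E ind r \<Longrightarrow> circuit E ind C \<Longrightarrow> card C = r \<or> card C = Suc r"
  unfolding paving_matroid_def by simp

lemma dependent_contains_circuit:
  assumes "finite S" "S \<subseteq> E" "\<not> ind S"
  shows "\<exists>C\<subseteq>S. circuit E ind C"
  using assms
proof (induction S rule: finite_psubset_induct)
  case (psubset S)
  show ?case
  proof (cases "\<forall>x\<in>S. ind (S - {x})")
    case True
    with psubset.prems show ?thesis unfolding circuit_def by blast
  next
    case False
    then obtain x where "x \<in> S" "\<not> ind (S - {x})" by blast
    with psubset.IH[of "S - {x}"] psubset.prems(1) show ?thesis by blast
  qed
qed

lemma paving_matroid_small_indep:
  assumes P: "paving_matroid E ind r" and S: "S \<subseteq> E" "finite S" "card S < r"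
  shows "ind S"
proof (rule ccontr)
  assume "\<not> ind S"
  with S obtain C where C: "C \<subseteq> S" "circuit E ind C"
    using dependent_contains_circuit by blast
  from C(1) S(2) have "card C \<le> card S" by (rule card_mono[rotated])
  moreover have "card C = r \<or> card C = Suc r" using P C(2) by (rule paving_matroid_circuit_card)
  ultimately show False using S(3) by linarith
qed

lemma finite_rank_matroid_dependent_Un:
  assumes M: "finite_rank_matroid E ind r" and I: "ind (A \<inter> B)"
    and A: "finite A" "card A = Suc (card (A \<inter> B))" "\<not> ind A"
    and B: "finite B" "card B = Suc (card (A \<inter> B))" "\<not> ind B"
    and K: "K \<subseteq> A \<union> B" "card (A \<inter> B) < card K"
  shows "\<not> ind K"
proof
  assume "ind K"
  have "finite K" by (rule card_ge_0_finite) (use K(2) in linarith)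
  moreover have "finite (A \<inter> B)" using A(1) by simp
  ultimately obtain x where x: "x \<in> K - A \<inter> B" "ind (insert x (A \<inter> B))"
    using finite_rank_matroid_augment[OF M I \<open>ind K\<close> _ _ K(2)] by blast
  have ins_eq: "insert x (A \<inter> B) = X" if X: "X \<in> {A, B}" "x \<in> X" for X
  proof (rule card_subset_eq)
    show "finite X" using X A(1) B(1) by auto
    show "insert x (A \<inter> B) \<subseteq> X" using X by auto
    show "card (insert x (A \<inter> B)) = card X" using X x(1) A(1,2) B(2) by auto
  qed
  from x(1) K(1) have "x \<in> A \<or> x \<in> B" by blast
  with ins_eq have "insert x (A \<inter> B) = A \<or> insert x (A \<inter> B) = B" by blast
  with x(2) A(3) B(3) show False by auto
qed

lemma paving_matroid_dependent_Un:
  assumes P: "paving_matroid E ind (Suc d)"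
    and A: "A \<subseteq> E" "card A = Suc d" "\<not> ind A" and B: "B \<subseteq> E" "card B = Suc d" "\<not> ind B"
    and meet: "d \<le> card (A \<inter> B)" and K: "K \<subseteq> A \<union> B" "card K = Suc d"
  shows "\<not> ind K"
proof -
  have fin: "finite A" "finite B" using A(2) B(2) by (blast intro: card_Suc_imp_finite)+
  show ?thesis
  proof (cases "A = B")
    case True
    with K A(2) fin(1) have "K = A" by (simp add: card_subset_eq)
    with A(3) show ?thesis by simp
  next
    case False
    have "card (A \<inter> B) \<noteq> Suc d"
      using False A(2) B(2) fin card_subset_eq[of A "A \<inter> B"] card_subset_eq[of B "A \<inter> B"]
      by (metis Int_lower1 Int_lower2)
    moreover have "card (A \<inter> B) \<le> Suc d" using fin(1) A(2) by (metis card_mono Int_lower1)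
    ultimately have "card (A \<inter> B) = d" using meet by simp
    have "ind (A \<inter> B)"
      by (rule paving_matroid_small_indep[OF P]) (use A(1) fin(1) \<open>card (A \<inter> B) = d\<close> in auto)
    from paving_matroid_finite_rank_matroid[OF P] this fin(1) _ A(3) fin(2) _ B(3) K(1)
    show ?thesis
      by (rule finite_rank_matroid_dependent_Un) (use A(2) B(2) K(2) \<open>card (A \<inter> B) = d\<close> in simp_all)
  qed
qed

section \<open>Translates of dependent sets of a sparse set\<close>

lemma d_sparse_card_less:
  assumes "d_sparse d E" "u \<noteq> 0" "F \<subseteq> E" "F \<subseteq> (\<lambda>x. u + x) ` E" "finite F"
  shows "card F < d"
  using assms unfolding d_sparse_def by (meson le_inf_iff not_le)

definition dependent_translates :: "'a::ab_group_add set \<Rightarrow> ('a set \<Rightarrow> bool) \<Rightarrow> nat \<Rightarrow> 'a set set" where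
  "dependent_translates E ind d = {(\<lambda>x. v + x) ` A | v A. A \<subseteq> E \<and> card A = Suc d \<and> \<not> ind A}"

lemma dependent_translates_card: "T \<in> dependent_translates E ind d \<Longrightarrow> card T = Suc d"
  unfolding dependent_translates_def by (auto simp: card_image translate_inj_on)

lemma dependent_translates_translate:
  assumes "T \<in> dependent_translates E ind d"
  shows "(\<lambda>x. v + x) ` T \<in> dependent_translates E ind d"
proof -
  from assms obtain w A where "A \<subseteq> E" "card A = Suc d" "\<not> ind A" "T = (\<lambda>x. w + x) ` A"
    unfolding dependent_translates_def by blast
  moreover from this(4) have "(\<lambda>x. v + x) ` T = (\<lambda>x. (w + v) + x) ` A"
    by (simp add: translation_assoc)
  ultimately show ?thesis unfolding dependent_translates_def by blast
qed

lemma dependent_translates_subset_iff: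
  fixes E :: "(int ^ 'n::finite) set"
  assumes sp: "d_sparse d E" and K: "K \<subseteq> E"
  shows "K \<in> dependent_translates E ind d \<longleftrightarrow> card K = Suc d \<and> \<not> ind K"
proof
  assume "K \<in> dependent_translates E ind d"
  then obtain v A where A: "A \<subseteq> E" "card A = Suc d" "\<not> ind A" and K_eq: "K = (\<lambda>x. v + x) ` A"
    unfolding dependent_translates_def by blast
  have "card K = Suc d" using K_eq A(2) by (simp add: card_image translate_inj_on)
  have "v = 0"
  proof (rule ccontr)
    assume "v \<noteq> 0"
    moreover have "K \<subseteq> (\<lambda>x. v + x) ` E" using A(1) K_eq by blast
    ultimately have "card K < d"
      using d_sparse_card_less[OF sp _ K] card_Suc_imp_finite[OF \<open>card K = Suc d\<close>] by blast
    with \<open>card K = Suc d\<close> show False by simp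
  qed
  with A K_eq show "card K = Suc d \<and> \<not> ind K" by simp
next
  assume "card K = Suc d \<and> \<not> ind K"
  with K show "K \<in> dependent_translates E ind d"
    unfolding dependent_translates_def by (intro CollectI exI[of _ 0] exI[of _ K]) simp
qed

lemma paving_family_dependent_translates:
  fixes E :: "(int ^ 'n::finite) set"
  assumes P: "paving_matroid E ind (Suc d)" and sp: "d_sparse d E"
  shows "paving_family (dependent_translates E ind d) d"
  unfolding paving_family_def
proof (intro conjI ballI allI impI)
  show "card T = Suc d" if "T \<in> dependent_translates E ind d" for T
    using that by (rule dependent_translates_card)
  fix T T' K
  assume T: "T \<in> dependent_translates E ind d" and T': "T' \<in> dependent_translates E ind d"
    and meet: "d \<le> card (T \<inter> T')" and K: "K \<subseteq> T \<union> T'" "card K = Suc d"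
  obtain v A where A: "A \<subseteq> E" "card A = Suc d" "\<not> ind A" and T_eq: "T = (\<lambda>x. v + x) ` A"
    using T unfolding dependent_translates_def by blast
  obtain w B where B: "B \<subseteq> E" "card B = Suc d" "\<not> ind B" and T'_eq: "T' = (\<lambda>x. w + x) ` B"
    using T' unfolding dependent_translates_def by blast
  have "v = w"
  proof (rule ccontr)
    assume "v \<noteq> w"
    let ?F = "(\<lambda>x. - v + x) ` (T \<inter> T')"
    have "?F \<subseteq> E" using A(1) T_eq by auto
    moreover have "?F \<subseteq> (\<lambda>x. (w - v) + x) ` E"
      using B(1) T'_eq by (auto simp: algebra_simps)
    moreover have "finite ?F" using A(2) T_eq card_Suc_imp_finite by blast
    moreover have "w - v \<noteq> 0" using \<open>v \<noteq> w\<close> by simp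
    ultimately have "card ?F < d" using d_sparse_card_less[OF sp] by blast
    moreover have "card ?F = card (T \<inter> T')" by (simp add: card_image translate_inj_on)
    ultimately show False using meet by simp
  qed
  define K' where "K' = (\<lambda>x. - v + x) ` K"
  have K_eq: "K = (\<lambda>x. v + x) ` K'" unfolding K'_def by (simp add: image_image)
  have K'_sub: "K' \<subseteq> A \<union> B" using K(1) T_eq T'_eq \<open>v = w\<close> unfolding K'_def by auto
  have card_K': "card K' = Suc d" using K(2) unfolding K'_def by (simp add: card_image translate_inj_on)
  have "T \<inter> T' = (\<lambda>x. v + x) ` (A \<inter> B)" using T_eq T'_eq \<open>v = w\<close> by (simp add: translation_Int)
  then have "d \<le> card (A \<inter> B)" using meet by (simp add: card_image translate_inj_on)
  with P A B have "\<not> ind K'" using K'_sub card_K' by (rule paving_matroid_dependent_Un)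
  moreover have "K' \<subseteq> E" using K'_sub A(1) B(1) by blast
  ultimately show "K \<in> dependent_translates E ind d"
    unfolding dependent_translates_def using K_eq card_K' by blast
qed

lemma paving_circuit_of_circuit:
  fixes E :: "(int ^ 'n::finite) set"
  assumes P: "paving_matroid E ind (Suc d)" and sp: "d_sparse d E" and C: "circuit E ind C"
  shows "paving_circuit (dependent_translates E ind d) d C"
proof -
  have CE: "C \<subseteq> E" and dep: "\<not> ind C" and minimal: "\<And>x. x \<in> C \<Longrightarrow> ind (C - {x})"
    using C unfolding circuit_def by auto
  have M: "finite_rank_matroid E ind (Suc d)" using P by (rule paving_matroid_finite_rank_matroid)
  consider "card C = Suc d" | "card C = Suc (Suc d)"
    using paving_matroid_circuit_card[OF P C] by blast
  then show ?thesis
  proof cases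
    case 1
    with dep have "C \<in> dependent_translates E ind d"
      using dependent_translates_subset_iff[OF sp CE] by blast
    then show ?thesis unfolding paving_circuit_def by blast
  next
    case 2
    have "K \<notin> dependent_translates E ind d" if K: "K \<subseteq> C" "card K = Suc d" for K
    proof -
      from K(2) 2 have "K \<noteq> C" by auto
      with K(1) obtain x where x: "x \<in> C" "K \<subseteq> C - {x}" by blast
      then have "ind K" by (intro finite_rank_matroid_indep_subset[OF M minimal[OF x(1)]])
      with K(1) CE show ?thesis using dependent_translates_subset_iff[OF sp] by blast
    qed
    with 2 show ?thesis unfolding paving_circuit_def using card_Suc_imp_finite by blast
  qed
qed

lemma paving_circuit_dependent:
  fixes E :: "(int ^ 'n::finite) set"
  assumes P: "paving_matroid E ind (Suc d)" and sp: "d_sparse d E"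
    and C: "paving_circuit (dependent_translates E ind d) d C" and CE: "C \<subseteq> E"
  shows "\<not> ind C"
proof (cases "C \<in> dependent_translates E ind d")
  case True
  with dependent_translates_subset_iff[OF sp CE] show ?thesis by blast
next
  case False
  with C have "card C = Suc (Suc d)" unfolding paving_circuit_def by blast
  moreover have "finite_rank_matroid E ind (Suc d)" using P by (rule paving_matroid_finite_rank_matroid)
  ultimately show ?thesis using finite_rank_matroid_card_le by fastforce
qed

lemma paving_matroid_indep_iff_no_paving_circuit:
  fixes E :: "(int ^ 'n::finite) set"
  assumes P: "paving_matroid E ind (Suc d)" and sp: "d_sparse d E" and A: "A \<subseteq> E"
  shows "ind A \<longleftrightarrow> (\<forall>C. paving_circuit (dependent_translates E ind d) d C \<longrightarrow> \<not> C \<subseteq> A)"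
proof -
  have M: "finite_rank_matroid E ind (Suc d)" using P by (rule paving_matroid_finite_rank_matroid)
  show ?thesis
  proof
    assume "ind A"
    then show "\<forall>C. paving_circuit (dependent_translates E ind d) d C \<longrightarrow> \<not> C \<subseteq> A"
      using paving_circuit_dependent[OF P sp] finite_rank_matroid_indep_subset[OF M] A by blast
  next
    assume no_circuit: "\<forall>C. paving_circuit (dependent_translates E ind d) d C \<longrightarrow> \<not> C \<subseteq> A"
    show "ind A"
    proof (rule finite_rank_matroid_finitary[OF M A])
      fix F assume F: "F \<subseteq> A" "finite F"
      show "ind F"
      proof (rule ccontr)
        assume "\<not> ind F"
        with F A obtain C where C: "C \<subseteq> F" "circuit E ind C"
          using dependent_contains_circuit[of F E ind] by blast
        from P sp C(2) have "paving_circuit (dependent_translates E ind d) d C"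
          by (rule paving_circuit_of_circuit)
        with no_circuit C(1) F(1) show False by blast
      qed
    qed
  qed
qed

theorem mainTheorem9:
  fixes d :: nat and E :: "(int ^ 'n) set" and indepM :: "(int ^ 'n) set \<Rightarrow> bool"
  assumes "d \<ge> 1"
    and "d_sparse d E"
    and "paving_matroid E indepM (d + 1)"
  shows "\<exists>I :: 'n bpoly set. paving_tropical_ideal I (d + 1) \<and>
           (\<forall>A. underlying_indep_restr I E A \<longleftrightarrow> indepM A)"
proof -
  let ?TT = "dependent_translates E indepM d"
  let ?I = "circuit_union_ideal (paving_circuit ?TT d)"
  have P: "paving_matroid E indepM (Suc d)" using assms(3) by simp
  then have M: "finite_rank_matroid E indepM (Suc d)" by (rule paving_matroid_finite_rank_matroid)
  have fam: "paving_family ?TT d" using P assms(2) by (rule paving_family_dependent_translates)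
  obtain B where B: "indepM B" "card B = Suc d"
    using finite_rank_matroid_has_rank[OF M] unfolding has_rank_def by blast
  have "B \<notin> ?TT"
    using dependent_translates_subset_iff[OF assms(2) finite_rank_matroid_subset_ground[OF M B(1)]] B(1)
    by blast
  have "paving_tropical_ideal ?I (d + 1)"
    by (rule paving_tropical_ideal_circuit_union_ideal[OF fam _ B(2) \<open>B \<notin> ?TT\<close>])
      (rule dependent_translates_translate)
  moreover have "underlying_indep_restr ?I E A \<longleftrightarrow> indepM A" for A
  proof -
    have "underlying_indep ?I A \<longleftrightarrow> (\<forall>C. paving_circuit ?TT d C \<longrightarrow> \<not> C \<subseteq> A)"
      by (rule underlying_indep_circuit_union_ideal_iff)
        (use paving_circuit_finite[OF fam] paving_circuit_nonempty[OF fam] in auto)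
    then show ?thesis
      using paving_matroid_indep_iff_no_paving_circuit[OF P assms(2)]
        finite_rank_matroid_subset_ground[OF M]
      unfolding underlying_indep_restr_def by blast
  qed
  ultimately show ?thesis by blast
qed

end
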